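(* Let $\Delta$ be a repository, $C\in\mathrm{dom}(\Delta)$ with $C:\Delta(C)\in\Delta$, $E_1,\ldots,E_m$ combinatory terms, $\tau\in\mathbb{T}_C$ and $k\in\mathbb{N}$. The following are equivalent: (1) $\Delta\vdash_k C\,E_1\cdots E_m:\tau$; (2) there exists a set of paths $P\subseteq\mathbb{P}_m\big(\bigcap\{S(\Delta(C))\mid\mathrm{level}(S)\le k,\ \mathrm{atoms}(S)\subseteq\mathrm{atoms}(\Delta)\cup\mathrm{atoms}(\tau)\}\big)$ such that (a) $\bigcap_{\pi\in P}\mathrm{tgt}_m(\pi)\le\tau$ and (b) $\Delta\vdash_k E_i:\bigcap_{\pi\in P}\mathrm{arg}_i(\pi)$ for $1\le i\le m$.
   Context: Types $\mathbb{T}_C\ni\tau ::= a\mid\alpha\mid\omega\mid\tau_1\to\tau_2\mid\tau_1\cap\tau_2\mid c(\tau)$ ($a$ constants, $\alpha$ type variables, $c$ unary constructors). Subtyping $\le$: least preorder with $\sigma\le\omega$; $\omega\le\omega\to\omega$; $\sigma\cap\tau\le\sigma$; $\sigma\cap\tau\le\tau$; $\sigma\le\tau_1,\sigma\le\tau_2\Rightarrow\sigma\le\tau_1\cap\tau_2$; $(\sigma\to\tau_1)\cap(\sigma\to\tau_2)\le\sigma\to\tau_1\cap\tau_2$; $\sigma_2\le\sigma_1,\tau_1\le\tau_2\Rightarrow\sigma_1\to\tau_1\le\sigma_2\to\tau_2$; $\tau_1\le\tau_2\Rightarrow c(\tau_1)\le c(\tau_2)$; $c(\tau_1)\cap c(\tau_2)\le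 c(\tau_1\cap\tau_2)$. Level: $0$ for $\omega,a,\alpha$; $\mathrm{level}(c(\tau))=1+\mathrm{level}(\tau)$; $\mathrm{level}(\sigma\to\tau)=1+\max(\mathrm{level}(\sigma),\mathrm{level}(\tau))$; $\mathrm{level}(\sigma\cap\tau)=\max(\mathrm{level}(\sigma),\mathrm{level}(\tau))$; for a substitution $S$, $\mathrm{level}(S)=\max_{\alpha\in\mathrm{dom}(S)}\mathrm{level}(S(\alpha))$. A repository $\Delta$ is a finite set of $C:\tau$ with distinct names; $\Delta(C)$ is the type of $C$. Combinatory terms $E::=C\mid(E\,E')$. Rules of $\Delta\vdash_k$: from $C:\tau\in\Delta$ and $\mathrm{level}(S)\le k$ infer $\Delta\vdash_k C:S(\tau)$; $\to$-elimination; $\cap$-introduction; subsumption along $\le$. Paths: $\pi ::= a\mid\alpha\mid\sigma\to\pi\mid c(\omega)\mid c(\pi)$. The set of paths of a type: $\mathbb{P}(a)=\{a\}$, $\mathbb{P}(\alpha)=\{\alpha\}$, $\mathbb{P}(\omega)=\emptyset$, $\mathbb{P}(\sigma\to\tau)=\{\sigma\to\pi\mid\pi\in\mathbb{P}(\tau)\}$, $\mathbb{P}(\sigma\cap\tau)=\mathbb{P}(\sigma)\cup\mathbb{P}(\tau)$, $\mathbb{P}(c(\tau))=\{c(\omega)\}$ if $\mathbb{P}(\tau)=\emptyset$ and $\{c(\pi)\mid\pi\in\mathbb{P}(\tau)\}$ otherwise. A path has arity at least $m$ if it is $\sigma_1\to\cdots\to\sigma_m\to\tau$; then $\mathrm{arg}_i(\pi)=\sigma_i$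 and $\mathrm{tgt}_m(\pi)=\tau$. $\mathbb{P}_m(\tau)$ is the set of paths in $\mathbb{P}(\tau)$ of arity at least $m$. The intersection of an empty family is $\omega$. $\mathrm{atoms}(\tau)$ is the set of constants, type variables and constructor names occurring in $\tau$; $\mathrm{atoms}(S)=\bigcup_{\alpha\in\mathrm{dom}(S)}\mathrm{atoms}(S(\alpha))$; $\mathrm{atoms}(\Delta)=\bigcup_{C:\tau\in\Delta}\mathrm{atoms}(\tau)$. The intersection over substitutions in (2) is taken modulo type equivalence $=$ (there are only finitely many such instances up to $=$). *)

theory Defs
  imports Main
begin

datatype ('a, 'v, 'c) ty =
    Const 'a
  | TVar 'v
  | Omega
  | Arr "('a, 'v, 'c) ty" "('a, 'v, 'c) ty"
  | Inter "('a, 'v, 'c) ty" "('a, 'v, 'c) ty"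
  | Ctor 'c "('a, 'v, 'c) ty"

inductive subtype :: "('a, 'v, 'c) ty \<Rightarrow> ('a, 'v, 'c) ty \<Rightarrow> bool" (infix "\<le>\<^sub>T" 50) where
  refl: "s \<le>\<^sub>T s"
| trans: "s \<le>\<^sub>T t \<Longrightarrow> t \<le>\<^sub>T u \<Longrightarrow> s \<le>\<^sub>T u"
| omega: "s \<le>\<^sub>T Omega"
| omega_arr: "Omega \<le>\<^sub>T Arr Omega Omega"
| inter1: "Inter s t \<le>\<^sub>T s"
| inter2: "Inter s t \<le>\<^sub>T t"
| glb: "s \<le>\<^sub>T t1 \<Longrightarrow> s \<le>\<^sub>T t2 \<Longrightarrow> s \<le>\<^sub>T Inter t1 t2"
| arr_dist: "Inter (Arr s t1) (Arr s t2) \<le>\<^sub>T Arr s (Inter t1 t2)"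
| arr: "s2 \<le>\<^sub>T s1 \<Longrightarrow> t1 \<le>\<^sub>T t2 \<Longrightarrow> Arr s1 t1 \<le>\<^sub>T Arr s2 t2"
| ctor: "t1 \<le>\<^sub>T t2 \<Longrightarrow> Ctor c t1 \<le>\<^sub>T Ctor c t2"
| ctor_dist: "Inter (Ctor c t1) (Ctor c t2) \<le>\<^sub>T Ctor c (Inter t1 t2)"

fun level :: "('a, 'v, 'c) ty \<Rightarrow> nat" where
  "level (Const a) = 0"
| "level (TVar v) = 0"
| "level Omega = 0"
| "level (Ctor c t) = Suc (level t)"
| "level (Arr s t) = Suc (max (level s) (level t))"
| "level (Inter s t) = max (level s) (level t)"

fun subst :: "('v \<Rightarrow> ('a, 'v, 'c) ty) \<Rightarrow> ('a, 'v, 'c) ty \<Rightarrow> ('a, 'v, 'c) ty" where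
  "subst S (Const a) = Const a"
| "subst S (TVar v) = S v"
| "subst S Omega = Omega"
| "subst S (Arr s t) = Arr (subst S s) (subst S t)"
| "subst S (Inter s t) = Inter (subst S s) (subst S t)"
| "subst S (Ctor c t) = Ctor c (subst S t)"

definition sdom :: "('v \<Rightarrow> ('a, 'v, 'c) ty) \<Rightarrow> 'v set" where
  "sdom S = {v. S v \<noteq> TVar v}"

definition is_subst :: "('v \<Rightarrow> ('a, 'v, 'c) ty) \<Rightarrow> bool" where
  "is_subst S \<longleftrightarrow> finite (sdom S)"

definition level_subst :: "('v \<Rightarrow> ('a, 'v, 'c) ty) \<Rightarrow> nat" where
  "level_subst S = Max (insert 0 ((\<lambda>v. level (S v)) ` sdom S))"

datatype ('a, 'v, 'c) atom = AConst 'a | AVar 'v | ACtor 'c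

fun atoms :: "('a, 'v, 'c) ty \<Rightarrow> ('a, 'v, 'c) atom set" where
  "atoms (Const a) = {AConst a}"
| "atoms (TVar v) = {AVar v}"
| "atoms Omega = {}"
| "atoms (Arr s t) = atoms s \<union> atoms t"
| "atoms (Inter s t) = atoms s \<union> atoms t"
| "atoms (Ctor c t) = insert (ACtor c) (atoms t)"

definition atoms_subst :: "('v \<Rightarrow> ('a, 'v, 'c) ty) \<Rightarrow> ('a, 'v, 'c) atom set" where
  "atoms_subst S = (\<Union>v\<in>sdom S. atoms (S v))"

type_synonym ('n, 'a, 'v, 'c) repo = "'n \<rightharpoonup> ('a, 'v, 'c) ty"

definition repository :: "('n, 'a, 'v, 'c) repo \<Rightarrow> bool" where
  "repository \<Delta> \<longleftrightarrow> finite (dom \<Delta>)"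

definition atoms_repo :: "('n, 'a, 'v, 'c) repo \<Rightarrow> ('a, 'v, 'c) atom set" where
  "atoms_repo \<Delta> = (\<Union>t\<in>ran \<Delta>. atoms t)"

datatype 'n cterm = Comb 'n | App "'n cterm" "'n cterm"

inductive typing :: "('n, 'a, 'v, 'c) repo \<Rightarrow> nat \<Rightarrow> 'n cterm \<Rightarrow> ('a, 'v, 'c) ty \<Rightarrow> bool" where
  var: "\<Delta> C = Some t \<Longrightarrow> is_subst S \<Longrightarrow> level_subst S \<le> k \<Longrightarrow> typing \<Delta> k (Comb C) (subst S t)"
| arr_elim: "typing \<Delta> k E (Arr s t) \<Longrightarrow> typing \<Delta> k E' s \<Longrightarrow> typing \<Delta> k (App E E') t"
| inter_intro: "typing \<Delta> k E s \<Longrightarrow> typing \<Delta> k E t \<Longrightarrow> typing \<Delta> k E (Inter s t)"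
| sub: "typing \<Delta> k E s \<Longrightarrow> s \<le>\<^sub>T t \<Longrightarrow> typing \<Delta> k E t"

definition apps :: "'n cterm \<Rightarrow> 'n cterm list \<Rightarrow> 'n cterm" where
  "apps E Es = foldl App E Es"

fun paths :: "('a, 'v, 'c) ty \<Rightarrow> ('a, 'v, 'c) ty set" where
  "paths (Const a) = {Const a}"
| "paths (TVar v) = {TVar v}"
| "paths Omega = {}"
| "paths (Arr s t) = Arr s ` paths t"
| "paths (Inter s t) = paths s \<union> paths t"
| "paths (Ctor c t) = (if paths t = {} then {Ctor c Omega} else Ctor c ` paths t)"

fun arity_ge :: "nat \<Rightarrow> ('a, 'v, 'c) ty \<Rightarrow> bool" where
  "arity_ge 0 t = True"
| "arity_ge (Suc m) (Arr s t) = arity_ge m t"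
| "arity_ge (Suc m) _ = False"

text \<open>arg_i (1-based) and tgt_m.\<close>
fun arg :: "nat \<Rightarrow> ('a, 'v, 'c) ty \<Rightarrow> ('a, 'v, 'c) ty" where
  "arg (Suc 0) (Arr s t) = s"
| "arg (Suc (Suc i)) (Arr s t) = arg (Suc i) t"
| "arg _ _ = Omega"

fun tgt :: "nat \<Rightarrow> ('a, 'v, 'c) ty \<Rightarrow> ('a, 'v, 'c) ty" where
  "tgt 0 t = t"
| "tgt (Suc m) (Arr s t) = tgt m t"
| "tgt (Suc m) t = t"

definition paths_m :: "nat \<Rightarrow> ('a, 'v, 'c) ty set \<Rightarrow> ('a, 'v, 'c) ty set" where
  "paths_m m X = {p \<in> X. arity_ge m p}"

fun Inters :: "('a, 'v, 'c) ty list \<Rightarrow> ('a, 'v, 'c) ty" where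
  "Inters [] = Omega"
| "Inters [t] = t"
| "Inters (t # ts) = Inter t (Inters ts)"

text \<open>Paths of the intersection of the family of admissible instances of Delta(C):
  since P(s \<inter> t) = P(s) \<union> P(t), these are the union of the paths of all instances.\<close>
definition inst_paths :: "('n, 'a, 'v, 'c) repo \<Rightarrow> 'n \<Rightarrow> nat \<Rightarrow> ('a, 'v, 'c) ty \<Rightarrow> ('a, 'v, 'c) ty set" where
  "inst_paths \<Delta> C k \<tau> =
     (\<Union> {paths (subst S (the (\<Delta> C))) | S.
          is_subst S \<and> level_subst S \<le> k \<and> atoms_subst S \<subseteq> atoms_repo \<Delta> \<union> atoms \<tau>})"

end

theory Submission
  imports Defs
begin

text \<open>A typing of \<open>C E\<^sub>1 \<dots> E\<^sub>m : \<tau>\<close> can be normalised: \<open>C\<close> receives a finite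
  intersection of level-\<open>k\<close> instances of \<open>\<Delta>(C)\<close> that is a subtype of
  \<open>\<sigma>\<^sub>1 \<rightarrow> \<dots> \<rightarrow> \<sigma>\<^sub>m \<rightarrow> \<tau>\<close>, with \<open>E\<^sub>i : \<sigma>\<^sub>i\<close>.  Subtyping against an arrow
  decomposes into paths: if \<open>\<rho> \<le> \<sigma> \<rightarrow> \<tau>\<close>, finitely many arrow paths \<open>a\<^sub>j \<rightarrow> b\<^sub>j\<close> of
  \<open>\<rho>\<close> satisfy \<open>\<sigma> \<le> \<Inter>a\<^sub>j\<close> and \<open>\<Inter>b\<^sub>j \<le> \<tau>\<close>.  This follows from the invariant that
  every path of a supertype is covered by paths of the subtype, which survives all
  subtyping rules, transitivity included.  Iterating the decomposition \<open>m\<close> times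
  produces \<open>P\<close>.  Replacing every atom outside \<open>\<Delta>\<close> and \<open>\<tau>\<close> by \<open>\<omega>\<close> preserves
  subtyping and typability and fixes \<open>\<tau>\<close>, so the instances may be taken over
  those atoms only.  Conversely, each path in \<open>P\<close> types \<open>C\<close>, \<open>m\<close> eliminations give
  its target, and intersection introduction collects the targets.\<close>

declare subtype.trans[trans]

lemma Inters_lower: "x \<in> set xs \<Longrightarrow> Inters xs \<le>\<^sub>T x"
  by (induction xs rule: Inters.induct) (auto intro: subtype.intros)

lemma Inters_greatest: "(\<And>x. x \<in> set xs \<Longrightarrow> s \<le>\<^sub>T x) \<Longrightarrow> s \<le>\<^sub>T Inters xs"
  by (induction xs rule: Inters.induct) (auto intro: subtype.intros)

lemma Inters_mono: "set ys \<subseteq> set xs \<Longrightarrow> Inters xs \<le>\<^sub>T Inters ys"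
  by (rule Inters_greatest) (auto intro: Inters_lower)

lemma Inter_mono: "s \<le>\<^sub>T s' \<Longrightarrow> t \<le>\<^sub>T t' \<Longrightarrow> Inter s t \<le>\<^sub>T Inter s' t'"
  by (meson subtype.glb subtype.inter1 subtype.inter2 subtype.trans)

lemma Inters_append: "Inters (xs @ ys) \<le>\<^sub>T Inter (Inters xs) (Inters ys)"
  by (intro subtype.glb Inters_mono) auto

lemma Inters_map_Arr: "Inters (map (Arr s) xs) \<le>\<^sub>T Arr s (Inters xs)"
proof (induction xs rule: Inters.induct)
  case 1
  have "Omega \<le>\<^sub>T Arr Omega Omega" by (rule subtype.omega_arr)
  also have "\<dots> \<le>\<^sub>T Arr s Omega" by (intro subtype.arr subtype.omega subtype.refl)
  finally show ?case by simp
next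
  case (3 x y ys)
  then show ?case
    by simp (meson Inter_mono subtype.arr_dist subtype.refl subtype.trans)
qed (simp add: subtype.refl)

lemma Inters_map_Ctor: "xs \<noteq> [] \<Longrightarrow> Inters (map (Ctor c) xs) \<le>\<^sub>T Ctor c (Inters xs)"
proof (induction xs rule: Inters.induct)
  case (3 x y ys)
  then show ?case
    by simp (meson Inter_mono subtype.ctor_dist subtype.refl subtype.trans)
qed (simp_all add: subtype.refl)

lemma paths_Inters: "paths (Inters xs) = (\<Union>x\<in>set xs. paths x)"
  by (induction xs rule: Inters.induct) auto

lemma le_path: "p \<in> paths t \<Longrightarrow> t \<le>\<^sub>T p"
proof (induction t arbitrary: p)
  case (Arr s t)
  then show ?case by (auto intro: subtype.arr subtype.refl)
next
  case (Inter s t)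
  then show ?case by (auto intro: subtype.trans[OF subtype.inter1] subtype.trans[OF subtype.inter2])
next
  case (Ctor c t)
  then show ?case by (auto split: if_splits intro: subtype.ctor subtype.omega)
qed (auto simp: subtype.refl)

lemma paths_of_path: "p \<in> paths t \<Longrightarrow> paths p = {p}"
proof (induction t arbitrary: p)
  case (Arr s t)
  from Arr.prems obtain q where "p = Arr s q" "q \<in> paths t" by auto
  then show ?case using Arr.IH(2)[of q] by simp
next
  case (Inter s t)
  then show ?case by (metis UnE paths.simps(5))
next
  case (Ctor c t)
  show ?case
  proof (cases "paths t = {}")
    case False
    with Ctor.prems obtain q where "p = Ctor c q" "q \<in> paths t" by auto
    then show ?thesis using Ctor.IH[of q] by simp
  qed (use Ctor.prems in simp)
qed auto

lemma Inters_paths: "\<exists>ps. set ps = paths t \<and> Inters ps \<le>\<^sub>T t"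
proof (induction t)
  case (Arr s t)
  then obtain ps where ps: "set ps = paths t" "Inters ps \<le>\<^sub>T t" by blast
  have "Inters (map (Arr s) ps) \<le>\<^sub>T Arr s (Inters ps)" by (rule Inters_map_Arr)
  also have "\<dots> \<le>\<^sub>T Arr s t" using ps(2) by (intro subtype.arr subtype.refl)
  finally show ?case using ps(1) by (intro exI[of _ "map (Arr s) ps"]) auto
next
  case (Inter s t)
  then obtain ps qs where "set ps = paths s" "Inters ps \<le>\<^sub>T s" "set qs = paths t" "Inters qs \<le>\<^sub>T t"
    by blast
  then show ?case
    by (intro exI[of _ "ps @ qs"]) (auto intro: subtype.trans[OF Inters_append] Inter_mono)
next
  case (Ctor c t)
  then obtain ps where ps: "set ps = paths t" "Inters ps \<le>\<^sub>T t" by blast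
  show ?case
  proof (cases "ps = []")
    case True
    with ps show ?thesis by (intro exI[of _ "[Ctor c Omega]"]) (auto intro: subtype.ctor)
  next
    case False
    with ps show ?thesis
      by (intro exI[of _ "map (Ctor c) ps"])
        (auto intro: subtype.trans[OF Inters_map_Ctor] subtype.ctor)
  qed
next
  case (Const a)
  show ?case by (intro exI[of _ "[Const a]"]) (simp add: subtype.refl)
next
  case (TVar v)
  show ?case by (intro exI[of _ "[TVar v]"]) (simp add: subtype.refl)
next
  case Omega
  show ?case by (intro exI[of _ "[]"]) (simp add: subtype.refl)
qed

section \<open>Covering paths by paths\<close>

text \<open>Syntactic witnesses for \<open>\<Inter>R \<le> p\<close> when \<open>p\<close> is a path.\<close>

definition arrow_cover :: "('a, 'v, 'c) ty set \<Rightarrow> ('a, 'v, 'c) ty \<Rightarrow> ('a, 'v, 'c) ty \<Rightarrow> bool" where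
  "arrow_cover R \<sigma> \<tau> \<longleftrightarrow> (\<exists>Q. set Q \<subseteq> {(a, b). Arr a b \<in> R}
     \<and> \<sigma> \<le>\<^sub>T Inters (map fst Q) \<and> Inters (map snd Q) \<le>\<^sub>T \<tau>)"

definition ctor_cover :: "('a, 'v, 'c) ty set \<Rightarrow> 'c \<Rightarrow> ('a, 'v, 'c) ty \<Rightarrow> bool" where
  "ctor_cover R c \<tau> \<longleftrightarrow> (\<exists>xs. xs \<noteq> [] \<and> set xs \<subseteq> {x. Ctor c x \<in> R} \<and> Inters xs \<le>\<^sub>T \<tau>)"

fun covers :: "('a, 'v, 'c) ty set \<Rightarrow> ('a, 'v, 'c) ty \<Rightarrow> bool" where
  "covers R (Arr \<sigma> \<tau>) = arrow_cover R \<sigma> \<tau>"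
| "covers R (Ctor c \<tau>) = ctor_cover R c \<tau>"
| "covers R p = (p \<in> R)"

lemma arrow_cover_weaken:
  "arrow_cover R \<sigma> \<tau> \<Longrightarrow> \<sigma>' \<le>\<^sub>T \<sigma> \<Longrightarrow> \<tau> \<le>\<^sub>T \<tau>' \<Longrightarrow> arrow_cover R \<sigma>' \<tau>'"
  unfolding arrow_cover_def by (meson subtype.trans)

lemma ctor_cover_weaken: "ctor_cover R c \<tau> \<Longrightarrow> \<tau> \<le>\<^sub>T \<tau>' \<Longrightarrow> ctor_cover R c \<tau>'"
  unfolding ctor_cover_def by (meson subtype.trans)

lemma arrow_cover_Inters:
  assumes "\<And>a b. (a, b) \<in> set Q \<Longrightarrow> arrow_cover R a b"
  shows "arrow_cover R (Inters (map fst Q)) (Inters (map snd Q))"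
proof -
  have "\<forall>q\<in>set Q. \<exists>Q'. set Q' \<subseteq> {(a, b). Arr a b \<in> R}
      \<and> fst q \<le>\<^sub>T Inters (map fst Q') \<and> Inters (map snd Q') \<le>\<^sub>T snd q"
    using assms unfolding arrow_cover_def by (metis prod.collapse)
  then obtain f where f: "\<forall>q\<in>set Q. set (f q) \<subseteq> {(a, b). Arr a b \<in> R}
      \<and> fst q \<le>\<^sub>T Inters (map fst (f q)) \<and> Inters (map snd (f q)) \<le>\<^sub>T snd q"
    by (rule bchoice[elim_format]) blast
  define Q' where "Q' = concat (map f Q)"
  have "Inters (map fst Q) \<le>\<^sub>T Inters (map fst Q')"
  proof (rule Inters_greatest)
    fix a assume "a \<in> set (map fst Q')"
    then obtain q where q: "q \<in> set Q" "a \<in> set (map fst (f q))" by (auto simp: Q'_def)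
    have "Inters (map fst Q) \<le>\<^sub>T fst q" using q(1) by (intro Inters_lower) auto
    also have "\<dots> \<le>\<^sub>T Inters (map fst (f q))" using f q(1) by blast
    also have "\<dots> \<le>\<^sub>T a" using q(2) by (rule Inters_lower)
    finally show "Inters (map fst Q) \<le>\<^sub>T a" .
  qed
  moreover have "Inters (map snd Q') \<le>\<^sub>T Inters (map snd Q)"
  proof (rule Inters_greatest)
    fix b assume "b \<in> set (map snd Q)"
    then obtain q where q: "q \<in> set Q" "b = snd q" by auto
    have "Inters (map snd Q') \<le>\<^sub>T Inters (map snd (f q))"
      using q(1) by (intro Inters_mono) (auto simp: Q'_def)
    also have "\<dots> \<le>\<^sub>T b" using f q by blast
    finally show "Inters (map snd Q') \<le>\<^sub>T b" .
  qed
  moreover have "set Q' \<subseteq> {(a, b). Arr a b \<in> R}" using f by (auto simp: Q'_def)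
  ultimately show ?thesis unfolding arrow_cover_def by blast
qed

lemma ctor_cover_Inters:
  assumes "xs \<noteq> []" and "\<And>x. x \<in> set xs \<Longrightarrow> ctor_cover R c x"
  shows "ctor_cover R c (Inters xs)"
proof -
  have "\<forall>x\<in>set xs. \<exists>ys. ys \<noteq> [] \<and> set ys \<subseteq> {y. Ctor c y \<in> R} \<and> Inters ys \<le>\<^sub>T x"
    using assms(2) unfolding ctor_cover_def by blast
  then obtain f where f: "\<forall>x\<in>set xs. f x \<noteq> [] \<and> set (f x) \<subseteq> {y. Ctor c y \<in> R}
      \<and> Inters (f x) \<le>\<^sub>T x"
    by (rule bchoice[elim_format]) blast
  define ys where "ys = concat (map f xs)"
  have "Inters ys \<le>\<^sub>T Inters xs"
  proof (rule Inters_greatest)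
    fix x assume x: "x \<in> set xs"
    have "Inters ys \<le>\<^sub>T Inters (f x)" using x by (intro Inters_mono) (auto simp: ys_def)
    also have "\<dots> \<le>\<^sub>T x" using f x by blast
    finally show "Inters ys \<le>\<^sub>T x" .
  qed
  moreover have "ys \<noteq> []" using assms(1) f by (cases xs) (auto simp: ys_def)
  moreover have "set ys \<subseteq> {y. Ctor c y \<in> R}" using f by (auto simp: ys_def)
  ultimately show ?thesis unfolding ctor_cover_def by blast
qed

lemma arrow_cover_paths_Arr: "arrow_cover (paths (Arr \<sigma> \<tau>)) \<sigma> \<tau>"
proof -
  obtain ps where ps: "set ps = paths \<tau>" "Inters ps \<le>\<^sub>T \<tau>" using Inters_paths by blast
  have "\<sigma> \<le>\<^sub>T Inters (map fst (map (Pair \<sigma>) ps))"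
    by (rule Inters_greatest) (auto intro: subtype.refl)
  with ps show ?thesis unfolding arrow_cover_def
    by (intro exI[of _ "map (Pair \<sigma>) ps"]) (auto simp: comp_def)
qed

lemma ctor_cover_paths_Ctor: "ctor_cover (paths (Ctor c \<tau>)) c \<tau>"
proof -
  obtain ps where ps: "set ps = paths \<tau>" "Inters ps \<le>\<^sub>T \<tau>" using Inters_paths by blast
  show ?thesis
  proof (cases "ps = []")
    case True
    with ps show ?thesis unfolding ctor_cover_def by (intro exI[of _ "[Omega]"]) auto
  next
    case False
    with ps show ?thesis unfolding ctor_cover_def by (intro exI[of _ ps]) auto
  qed
qed

lemma covers_self: "p \<in> R \<Longrightarrow> covers R p"
proof (cases p)
  case (Arr a b)
  then show "p \<in> R \<Longrightarrow> covers R p"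
    by (auto simp: arrow_cover_def intro!: exI[of _ "[(a, b)]"] subtype.refl)
next
  case (Ctor c x)
  then show "p \<in> R \<Longrightarrow> covers R p"
    by (auto simp: ctor_cover_def intro!: exI[of _ "[x]"] subtype.refl)
qed auto

lemma covers_trans:
  assumes "\<And>p. p \<in> R' \<Longrightarrow> covers R p" and "covers R' q"
  shows "covers R q"
proof (cases q)
  case (Arr \<sigma> \<tau>)
  with assms(2) obtain Q where Q: "set Q \<subseteq> {(a, b). Arr a b \<in> R'}"
    "\<sigma> \<le>\<^sub>T Inters (map fst Q)" "Inters (map snd Q) \<le>\<^sub>T \<tau>"
    by (auto simp: arrow_cover_def)
  have "arrow_cover R (Inters (map fst Q)) (Inters (map snd Q))"
    using Q(1) assms(1) by (intro arrow_cover_Inters) fastforce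
  with Q(2,3) Arr show ?thesis by (simp add: arrow_cover_weaken)
next
  case (Ctor c \<tau>)
  with assms(2) obtain xs where xs: "xs \<noteq> []" "set xs \<subseteq> {x. Ctor c x \<in> R'}" "Inters xs \<le>\<^sub>T \<tau>"
    by (auto simp: ctor_cover_def)
  have "ctor_cover R c (Inters xs)"
    using xs(1,2) assms(1) by (intro ctor_cover_Inters) fastforce+
  with xs(3) Ctor show ?thesis by (simp add: ctor_cover_weaken)
qed (metis assms covers.simps(3-6))+

text \<open>Stated for every path of the supertype, not only for arrows, so that the
  induction passes through the transitivity rule.\<close>

lemma subtype_covers: "s \<le>\<^sub>T t \<Longrightarrow> p \<in> paths t \<Longrightarrow> covers (paths s) p"
proof (induction arbitrary: p rule: subtype.induct)
  case (trans s t u)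
  then show ?case by (blast intro: covers_trans)
next
  case (arr s2 s1 t1 t2)
  then obtain q where q: "p = Arr s2 q" "q \<in> paths t2" by auto
  have "t1 \<le>\<^sub>T q" using arr.hyps(2) le_path[OF q(2)] by (rule subtype.trans)
  with arr.hyps(1) show ?case
    unfolding q(1) covers.simps by (rule arrow_cover_weaken[OF arrow_cover_paths_Arr])
next
  case (ctor t1 t2 c)
  have "\<exists>q. p = Ctor c q \<and> t1 \<le>\<^sub>T q"
  proof (cases "paths t2 = {}")
    case True
    with ctor.prems show ?thesis by (auto intro: subtype.omega)
  next
    case False
    with ctor.prems obtain q where "p = Ctor c q" "q \<in> paths t2" by auto
    moreover from ctor.hyps(1) \<open>q \<in> paths t2\<close> have "t1 \<le>\<^sub>T q" by (meson le_path subtype.trans)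
    ultimately show ?thesis by blast
  qed
  then obtain q where q: "p = Ctor c q" "t1 \<le>\<^sub>T q" by blast
  from q(2) show ?case
    unfolding q(1) covers.simps by (rule ctor_cover_weaken[OF ctor_cover_paths_Ctor])
next
  case (ctor_dist c t1 t2)
  then show ?case by (intro covers_self) (auto split: if_splits)
qed (auto intro: covers_self)

lemma subtype_Arr_cover:
  assumes "\<rho> \<le>\<^sub>T Arr \<sigma> \<tau>"
  shows "arrow_cover (paths \<rho>) \<sigma> \<tau>"
proof -
  obtain ps where ps: "set ps = paths \<tau>" "Inters ps \<le>\<^sub>T \<tau>" using Inters_paths by blast
  have "arrow_cover (paths \<rho>)
      (Inters (map fst (map (Pair \<sigma>) ps))) (Inters (map snd (map (Pair \<sigma>) ps)))"
  proof (rule arrow_cover_Inters)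
    fix a b assume "(a, b) \<in> set (map (Pair \<sigma>) ps)"
    then have "Arr a b \<in> paths (Arr \<sigma> \<tau>)" using ps(1) by auto
    then show "arrow_cover (paths \<rho>) a b" using subtype_covers[OF assms, of "Arr a b"] by simp
  qed
  moreover have "\<sigma> \<le>\<^sub>T Inters (map fst (map (Pair \<sigma>) ps))"
    by (rule Inters_greatest) (auto intro: subtype.refl)
  moreover have "map snd (map (Pair \<sigma>) ps) = ps" by (induction ps) auto
  ultimately show ?thesis using ps(2) by (metis arrow_cover_weaken)
qed

fun arrows :: "('a, 'v, 'c) ty list \<Rightarrow> ('a, 'v, 'c) ty \<Rightarrow> ('a, 'v, 'c) ty" where
  "arrows [] \<tau> = \<tau>"
| "arrows (\<sigma> # \<sigma>s) \<tau> = Arr \<sigma> (arrows \<sigma>s \<tau>)"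

lemma subtype_arrows_paths:
  "\<rho> \<le>\<^sub>T arrows \<sigma>s \<tau> \<Longrightarrow> \<exists>P. set P \<subseteq> paths_m (length \<sigma>s) (paths \<rho>)
     \<and> Inters (map (tgt (length \<sigma>s)) P) \<le>\<^sub>T \<tau>
     \<and> (\<forall>i<length \<sigma>s. \<sigma>s ! i \<le>\<^sub>T Inters (map (arg (Suc i)) P))"
proof (induction \<sigma>s arbitrary: \<rho>)
  case Nil
  obtain ps where ps: "set ps = paths \<rho>" "Inters ps \<le>\<^sub>T \<rho>" using Inters_paths by blast
  have "Inters ps \<le>\<^sub>T \<tau>" using ps(2) Nil by (simp add: subtype.trans)
  with ps(1) show ?case by (intro exI[of _ ps]) (simp add: paths_m_def)
next
  case (Cons \<sigma> \<sigma>s)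
  let ?m = "length \<sigma>s"
  obtain Q where Q: "set Q \<subseteq> {(a, b). Arr a b \<in> paths \<rho>}"
    "\<sigma> \<le>\<^sub>T Inters (map fst Q)" "Inters (map snd Q) \<le>\<^sub>T arrows \<sigma>s \<tau>"
    using subtype_Arr_cover[of \<rho> \<sigma> "arrows \<sigma>s \<tau>"] Cons.prems by (auto simp: arrow_cover_def)
  obtain P' where P': "set P' \<subseteq> paths_m ?m (paths (Inters (map snd Q)))"
    "Inters (map (tgt ?m) P') \<le>\<^sub>T \<tau>" "\<forall>i<?m. \<sigma>s ! i \<le>\<^sub>T Inters (map (arg (Suc i)) P')"
    using Cons.IH[OF Q(3)] by blast
  have "paths b = {b}" if "(a, b) \<in> set Q" for a b
  proof -
    have "Arr a ` paths b = Arr a ` {b}" using Q(1) that paths_of_path[of "Arr a b" \<rho>] by auto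
    then show ?thesis by (rule inj_image_eq_iff[THEN iffD1, rotated]) (simp add: inj_def)
  qed
  then have paths_snd_Q: "paths (Inters (map snd Q)) = snd ` set Q" by (force simp: paths_Inters)
  define Q' where "Q' = filter (\<lambda>(a, b). b \<in> set P') Q"
  have snd_Q': "set (map snd Q') = set P'"
  proof
    show "set (map snd Q') \<subseteq> set P'" by (auto simp: Q'_def)
    show "set P' \<subseteq> set (map snd Q')"
    proof
      fix b assume b: "b \<in> set P'"
      then have "b \<in> snd ` set Q" using P'(1) paths_snd_Q by (auto simp: paths_m_def)
      with b show "b \<in> set (map snd Q')" by (force simp: Q'_def)
    qed
  qed
  define P where "P = map (\<lambda>(a, b). Arr a b) Q'"
  have tgt_P: "map (tgt (Suc ?m)) P = map (tgt ?m) (map snd Q')"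
    and arg_P: "\<And>j. map (arg (Suc (Suc j))) P = map (arg (Suc j)) (map snd Q')"
    and arg1_P: "map (arg (Suc 0)) P = map fst Q'"
    by (auto simp: P_def)
  have "set P \<subseteq> paths_m (Suc ?m) (paths \<rho>)"
    using Q(1) P'(1) by (fastforce simp: P_def Q'_def paths_m_def)
  moreover have "Inters (map (tgt (Suc ?m)) P) \<le>\<^sub>T \<tau>"
  proof -
    have "Inters (map (tgt (Suc ?m)) P) \<le>\<^sub>T Inters (map (tgt ?m) P')"
      unfolding tgt_P by (rule Inters_mono) (metis set_map snd_Q' order_refl)
    also have "\<dots> \<le>\<^sub>T \<tau>" by (rule P'(2))
    finally show ?thesis .
  qed
  moreover have "(\<sigma> # \<sigma>s) ! i \<le>\<^sub>T Inters (map (arg (Suc i)) P)" if "i < Suc ?m" for i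
  proof (cases i)
    case 0
    have "\<sigma> \<le>\<^sub>T Inters (map fst Q)" by (rule Q(2))
    also have "\<dots> \<le>\<^sub>T Inters (map fst Q')" by (rule Inters_mono) (auto simp: Q'_def)
    finally show ?thesis using 0 arg1_P by simp
  next
    case (Suc j)
    have "\<sigma>s ! j \<le>\<^sub>T Inters (map (arg (Suc j)) P')" using P'(3) that Suc by simp
    also have "\<dots> \<le>\<^sub>T Inters (map (arg (Suc (Suc j))) P)"
      unfolding arg_P by (rule Inters_mono) (metis set_map snd_Q' order_refl)
    finally show ?thesis using Suc by simp
  qed
  ultimately show ?case by auto
qed

section \<open>Inversion of typing\<close>

lemma apps_Cons: "apps E (E' # Es) = apps (App E E') Es"
  by (simp add: apps_def)

lemma typing_App_inv:
  "typing \<Delta> k (App E E') \<tau> \<Longrightarrow> \<exists>\<sigma>. typing \<Delta> k E (Arr \<sigma> \<tau>) \<and> typing \<Delta> k E' \<sigma>"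
proof (induction "App E E'" \<tau> rule: typing.induct)
  case (inter_intro \<Delta> k s t)
  then obtain \<sigma>1 \<sigma>2 where h: "typing \<Delta> k E (Arr \<sigma>1 s)" "typing \<Delta> k E' \<sigma>1"
    "typing \<Delta> k E (Arr \<sigma>2 t)" "typing \<Delta> k E' \<sigma>2" by blast
  have "Inter (Arr \<sigma>1 s) (Arr \<sigma>2 t) \<le>\<^sub>T Inter (Arr (Inter \<sigma>1 \<sigma>2) s) (Arr (Inter \<sigma>1 \<sigma>2) t)"
    by (intro Inter_mono subtype.arr subtype.inter1 subtype.inter2 subtype.refl)
  also have "\<dots> \<le>\<^sub>T Arr (Inter \<sigma>1 \<sigma>2) (Inter s t)" by (rule subtype.arr_dist)
  finally have "typing \<Delta> k E (Arr (Inter \<sigma>1 \<sigma>2) (Inter s t))"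
    using h by (blast intro: typing.sub typing.inter_intro)
  moreover have "typing \<Delta> k E' (Inter \<sigma>1 \<sigma>2)" using h(2,4) by (rule typing.inter_intro)
  ultimately show ?case by blast
next
  case (sub \<Delta> k s t)
  then obtain \<sigma> where "typing \<Delta> k E (Arr \<sigma> s)" "typing \<Delta> k E' \<sigma>" by blast
  moreover have "Arr \<sigma> s \<le>\<^sub>T Arr \<sigma> t" using \<open>s \<le>\<^sub>T t\<close> by (intro subtype.arr subtype.refl)
  ultimately show ?case using typing.sub by blast
qed blast

lemma typing_apps_inv:
  "typing \<Delta> k (apps E Es) \<tau> \<Longrightarrow> \<exists>\<sigma>s. length \<sigma>s = length Es \<and> typing \<Delta> k E (arrows \<sigma>s \<tau>)
     \<and> (\<forall>i<length Es. typing \<Delta> k (Es ! i) (\<sigma>s ! i))"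
proof (induction Es arbitrary: E)
  case Nil
  then show ?case by (simp add: apps_def)
next
  case (Cons E' Es)
  then obtain \<sigma>s where \<sigma>s: "length \<sigma>s = length Es" "typing \<Delta> k (App E E') (arrows \<sigma>s \<tau>)"
    "\<forall>i<length Es. typing \<Delta> k (Es ! i) (\<sigma>s ! i)" by (auto simp: apps_Cons)
  then obtain \<sigma> where "typing \<Delta> k E (arrows (\<sigma> # \<sigma>s) \<tau>)" "typing \<Delta> k E' \<sigma>"
    using typing_App_inv by fastforce
  with \<sigma>s(1,3) show ?case
    by (intro exI[of _ "\<sigma> # \<sigma>s"]) (auto simp: nth_Cons split: nat.split)
qed

definition level_instances :: "nat \<Rightarrow> ('a, 'v, 'c) ty \<Rightarrow> ('a, 'v, 'c) ty set" where
  "level_instances k t = {subst S t | S. is_subst S \<and> level_subst S \<le> k}"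

lemma typing_Comb_inv:
  "typing \<Delta> k (Comb C) \<rho> \<Longrightarrow> \<exists>L. set L \<subseteq> level_instances k (the (\<Delta> C)) \<and> Inters L \<le>\<^sub>T \<rho>"
proof (induction "Comb C" \<rho> rule: typing.induct)
  case (var \<Delta> t S k)
  then show ?case
    by (intro exI[of _ "[subst S t]"]) (auto simp: level_instances_def subtype.refl)
next
  case (inter_intro \<Delta> k s t)
  then obtain L1 L2 where "set L1 \<subseteq> level_instances k (the (\<Delta> C))" "Inters L1 \<le>\<^sub>T s"
    "set L2 \<subseteq> level_instances k (the (\<Delta> C))" "Inters L2 \<le>\<^sub>T t" by blast
  then show ?case
    by (intro exI[of _ "L1 @ L2"]) (auto intro: subtype.trans[OF Inters_append] Inter_mono)
next
  case (sub \<Delta> k s t)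
  then show ?case by (blast intro: subtype.trans)
qed

section \<open>Erasing foreign atoms\<close>

fun erase :: "('a, 'v, 'c) atom set \<Rightarrow> ('a, 'v, 'c) ty \<Rightarrow> ('a, 'v, 'c) ty" where
  "erase A (Const a) = (if AConst a \<in> A then Const a else Omega)"
| "erase A (TVar v) = (if AVar v \<in> A then TVar v else Omega)"
| "erase A Omega = Omega"
| "erase A (Arr s t) = Arr (erase A s) (erase A t)"
| "erase A (Inter s t) = Inter (erase A s) (erase A t)"
| "erase A (Ctor c t) = (if ACtor c \<in> A then Ctor c (erase A t) else Omega)"

lemma erase_mono: "s \<le>\<^sub>T t \<Longrightarrow> erase A s \<le>\<^sub>T erase A t"
proof (induction rule: subtype.induct)
  case (trans s t u)
  then show ?case by (blast intro: subtype.trans)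
qed (simp_all add: subtype.intros)

lemma erase_id: "atoms t \<subseteq> A \<Longrightarrow> erase A t = t"
  by (induction t) auto

lemma erase_Inters: "erase A (Inters xs) = Inters (map (erase A) xs)"
  by (induction xs rule: Inters.induct) auto

lemma erase_arrows: "erase A (arrows \<sigma>s \<tau>) = arrows (map (erase A) \<sigma>s) (erase A \<tau>)"
  by (induction \<sigma>s) auto

lemma level_erase: "level (erase A t) \<le> level t"
  by (induction t) auto

lemma atoms_erase: "atoms (erase A t) \<subseteq> A"
  by (induction t) auto

lemma level_subst_le_iff:
  "is_subst S \<Longrightarrow> level_subst S \<le> k \<longleftrightarrow> (\<forall>v\<in>sdom S. level (S v) \<le> k)"
  by (simp add: level_subst_def is_subst_def)

lemma erase_subst:
  assumes "atoms t \<subseteq> A" and "is_subst S" and "level_subst S \<le> k"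
  obtains S' where "is_subst S'" "level_subst S' \<le> k" "atoms_subst S' \<subseteq> A"
    "erase A (subst S t) = subst S' t"
proof
  define S' where "S' v = (if v \<in> sdom S then erase A (S v) else TVar v)" for v
  have dom: "sdom S' \<subseteq> sdom S" by (auto simp: sdom_def S'_def)
  then show "is_subst S'" using assms(2) by (auto simp: is_subst_def intro: finite_subset)
  then show "level_subst S' \<le> k"
    using assms(2,3) dom level_erase by (fastforce simp: level_subst_le_iff S'_def intro: le_trans)
  show "atoms_subst S' \<subseteq> A"
    using dom atoms_erase by (fastforce simp: atoms_subst_def S'_def)
  show "erase A (subst S t) = subst S' t"
    using assms(1) by (induction t) (auto simp: S'_def sdom_def)
qed

lemma typing_erase: "typing \<Delta> k E t \<Longrightarrow> atoms_repo \<Delta> \<subseteq> A \<Longrightarrow> typing \<Delta> k E (erase A t)"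
proof (induction rule: typing.induct)
  case (var \<Delta> C t S k)
  then have "atoms t \<subseteq> A" by (auto simp: atoms_repo_def ran_def)
  then obtain S' where "is_subst S'" "level_subst S' \<le> k" "erase A (subst S t) = subst S' t"
    using erase_subst var.hyps(2,3) by metis
  with var.hyps(1) show ?case by (metis typing.var)
next
  case (arr_elim \<Delta> k E s t E')
  then show ?case by (auto intro: typing.arr_elim)
next
  case (inter_intro \<Delta> k E s t)
  then show ?case by (auto intro: typing.inter_intro)
next
  case (sub \<Delta> k E s t)
  then show ?case by (blast intro: typing.sub erase_mono)
qed

lemma typing_Comb_Omega:
  assumes "C \<in> dom \<Delta>"
  shows "typing \<Delta> k (Comb C) Omega"
proof -
  obtain t where t: "\<Delta> C = Some t" using assms by auto
  have "typing \<Delta> k (Comb C) (subst TVar t)"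
    using t by (rule typing.var) (simp_all add: is_subst_def level_subst_def sdom_def)
  then show ?thesis by (rule typing.sub) (rule subtype.omega)
qed

lemma typing_apps_Omega:
  "typing \<Delta> k E Omega \<Longrightarrow> \<forall>E'\<in>set Es. typing \<Delta> k E' Omega \<Longrightarrow> typing \<Delta> k (apps E Es) Omega"
proof (induction Es arbitrary: E)
  case Nil
  then show ?case by (simp add: apps_def)
next
  case (Cons E' Es)
  have "typing \<Delta> k E (Arr Omega Omega)" using Cons.prems(1) subtype.omega_arr by (rule typing.sub)
  then have "typing \<Delta> k (App E E') Omega" using Cons.prems(2) by (simp add: typing.arr_elim)
  with Cons show ?case by (simp add: apps_Cons)
qed

lemma typing_apps_path:
  "arity_ge (length Es) \<pi> \<Longrightarrow> typing \<Delta> k E \<pi> \<Longrightarrow>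
   \<forall>i<length Es. typing \<Delta> k (Es ! i) (arg (Suc i) \<pi>) \<Longrightarrow>
   typing \<Delta> k (apps E Es) (tgt (length Es) \<pi>)"
proof (induction Es arbitrary: E \<pi>)
  case Nil
  then show ?case by (simp add: apps_def)
next
  case (Cons E' Es)
  then obtain a b where \<pi>: "\<pi> = Arr a b" "arity_ge (length Es) b"
    by (cases "(length (E' # Es), \<pi>)" rule: arity_ge.cases) auto
  have "typing \<Delta> k E' a"
    using Cons.prems(3) \<pi>(1) by (metis arg.simps(1) length_Cons nth_Cons_0 zero_less_Suc)
  with Cons.prems(2) \<pi>(1) have "typing \<Delta> k (App E E') b" by (blast intro: typing.arr_elim)
  moreover have "\<forall>i<length Es. typing \<Delta> k (Es ! i) (arg (Suc i) b)"
    using Cons.prems(3) \<pi>(1) by (metis arg.simps(2) length_Cons nth_Cons_Suc Suc_mono)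
  ultimately show ?case using Cons.IH \<pi> by (simp add: apps_Cons)
qed

lemma typing_Inters:
  "typing \<Delta> k E Omega \<Longrightarrow> \<forall>x\<in>set xs. typing \<Delta> k E x \<Longrightarrow> typing \<Delta> k E (Inters xs)"
  by (induction xs rule: Inters.induct) (auto intro: typing.inter_intro)

lemma typing_inst_path:
  assumes "C \<in> dom \<Delta>" and "\<pi> \<in> inst_paths \<Delta> C k \<tau>"
  shows "typing \<Delta> k (Comb C) \<pi>"
proof -
  obtain t where t: "\<Delta> C = Some t" using assms(1) by auto
  with assms(2) obtain S where S: "is_subst S" "level_subst S \<le> k" "\<pi> \<in> paths (subst S t)"
    by (auto simp: inst_paths_def)
  have "typing \<Delta> k (Comb C) (subst S t)" using t S(1,2) by (rule typing.var)
  then show ?thesis using le_path[OF S(3)] by (rule typing.sub)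
qed

lemma paths_erase_level_instances:
  assumes "\<Delta> C = Some t" and "set L \<subseteq> level_instances k t"
  shows "paths (Inters (map (erase (atoms_repo \<Delta> \<union> atoms \<tau>)) L)) \<subseteq> inst_paths \<Delta> C k \<tau>"
proof
  let ?A = "atoms_repo \<Delta> \<union> atoms \<tau>"
  fix \<pi> assume "\<pi> \<in> paths (Inters (map (erase ?A) L))"
  then obtain S where S: "is_subst S" "level_subst S \<le> k" "\<pi> \<in> paths (erase ?A (subst S t))"
    using assms(2) by (auto simp: paths_Inters level_instances_def)
  have "atoms t \<subseteq> ?A" using assms(1) by (auto simp: atoms_repo_def ran_def)
  then obtain S' where "is_subst S'" "level_subst S' \<le> k" "atoms_subst S' \<subseteq> ?A"
    "erase ?A (subst S t) = subst S' t"
    using erase_subst S(1,2) by metis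
  with S(3) assms(1) show "\<pi> \<in> inst_paths \<Delta> C k \<tau>" by (auto simp: inst_paths_def)
qed

lemma typing_apps_Comb_imp_paths:
  assumes "C \<in> dom \<Delta>" and "typing \<Delta> k (apps (Comb C) Es) \<tau>"
  shows "\<exists>P. set P \<subseteq> paths_m (length Es) (inst_paths \<Delta> C k \<tau>)
    \<and> Inters (map (tgt (length Es)) P) \<le>\<^sub>T \<tau>
    \<and> (\<forall>i<length Es. typing \<Delta> k (Es ! i) (Inters (map (arg (Suc i)) P)))"
proof -
  define A where "A = atoms_repo \<Delta> \<union> atoms \<tau>"
  obtain t where t: "\<Delta> C = Some t" using assms(1) by auto
  obtain \<sigma>s where \<sigma>s: "length \<sigma>s = length Es" "typing \<Delta> k (Comb C) (arrows \<sigma>s \<tau>)"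
    "\<forall>i<length Es. typing \<Delta> k (Es ! i) (\<sigma>s ! i)"
    using typing_apps_inv[OF assms(2)] by blast
  obtain L where L: "set L \<subseteq> level_instances k t" "Inters L \<le>\<^sub>T arrows \<sigma>s \<tau>"
    using typing_Comb_inv[OF \<sigma>s(2)] t by auto
  txt \<open>Erasure fixes \<open>\<tau>\<close> and the repository and confines the instances to their atoms.\<close>
  have "erase A \<tau> = \<tau>" by (rule erase_id) (simp add: A_def)
  with erase_mono[OF L(2), of A]
  have "Inters (map (erase A) L) \<le>\<^sub>T arrows (map (erase A) \<sigma>s) \<tau>"
    by (simp add: erase_Inters erase_arrows)
  then obtain P where P: "set P \<subseteq> paths_m (length Es) (paths (Inters (map (erase A) L)))"
    "Inters (map (tgt (length Es)) P) \<le>\<^sub>T \<tau>"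
    "\<forall>i<length Es. erase A (\<sigma>s ! i) \<le>\<^sub>T Inters (map (arg (Suc i)) P)"
    using subtype_arrows_paths \<sigma>s(1) by fastforce
  have "set P \<subseteq> paths_m (length Es) (inst_paths \<Delta> C k \<tau>)"
    using P(1) paths_erase_level_instances[of \<Delta> C t L k \<tau>] t L(1) by (auto simp: paths_m_def A_def)
  moreover have "typing \<Delta> k (Es ! i) (Inters (map (arg (Suc i)) P))" if "i < length Es" for i
  proof -
    have "typing \<Delta> k (Es ! i) (erase A (\<sigma>s ! i))"
      using \<sigma>s(3) that by (intro typing_erase) (auto simp: A_def)
    then show ?thesis by (rule typing.sub) (use P(3) that in blast)
  qed
  ultimately show ?thesis using P(2) by blast
qed

lemma paths_imp_typing_apps_Comb:
  assumes "C \<in> dom \<Delta>"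
    and "set P \<subseteq> paths_m (length Es) (inst_paths \<Delta> C k \<tau>)"
    and "Inters (map (tgt (length Es)) P) \<le>\<^sub>T \<tau>"
    and "\<forall>i<length Es. typing \<Delta> k (Es ! i) (Inters (map (arg (Suc i)) P))"
  shows "typing \<Delta> k (apps (Comb C) Es) \<tau>"
proof -
  have "typing \<Delta> k E Omega" if "E \<in> set Es" for E
  proof -
    from that obtain i where "i < length Es" "E = Es ! i" by (auto simp: in_set_conv_nth)
    with assms(4) show ?thesis using subtype.omega typing.sub by blast
  qed
  then have "typing \<Delta> k (apps (Comb C) Es) Omega"
    using typing_Comb_Omega[OF assms(1)] typing_apps_Omega by blast
  moreover have "typing \<Delta> k (apps (Comb C) Es) (tgt (length Es) \<pi>)" if "\<pi> \<in> set P" for \<pi>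
  proof (rule typing_apps_path)
    have "\<pi> \<in> inst_paths \<Delta> C k \<tau>" "arity_ge (length Es) \<pi>"
      using that assms(2) by (auto simp: paths_m_def)
    then show "arity_ge (length Es) \<pi>" "typing \<Delta> k (Comb C) \<pi>"
      using typing_inst_path[OF assms(1)] by auto
    show "\<forall>i<length Es. typing \<Delta> k (Es ! i) (arg (Suc i) \<pi>)"
    proof (intro allI impI)
      fix i assume "i < length Es"
      then have "typing \<Delta> k (Es ! i) (Inters (map (arg (Suc i)) P))" using assms(4) by blast
      moreover have "Inters (map (arg (Suc i)) P) \<le>\<^sub>T arg (Suc i) \<pi>"
        using that by (intro Inters_lower) simp
      ultimately show "typing \<Delta> k (Es ! i) (arg (Suc i) \<pi>)" by (rule typing.sub)
    qed
  qed
  ultimately have "typing \<Delta> k (apps (Comb C) Es) (Inters (map (tgt (length Es)) P))"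
    by (intro typing_Inters) auto
  then show ?thesis using assms(3) by (rule typing.sub)
qed

lemma Ball_atLeastAtMost_1_iff: "(\<forall>i\<in>{1..n}. Q i) \<longleftrightarrow> (\<forall>i<n. Q (Suc i))"
proof
  assume Q: "\<forall>i<n. Q (Suc i)"
  show "\<forall>i\<in>{1..n}. Q i"
  proof
    fix i :: nat assume "i \<in> {1..n}"
    then obtain j where "i = Suc j" "j < n" by (cases i) auto
    with Q show "Q i" by blast
  qed
qed auto

theorem lemma4p11:
  fixes \<Delta> :: "('n, 'a, 'v, 'c) repo" and C :: 'n and Es :: "'n cterm list"
    and \<tau> :: "('a, 'v, 'c) ty" and k :: nat
  assumes "repository \<Delta>" and "C \<in> dom \<Delta>"
  shows "typing \<Delta> k (apps (Comb C) Es) \<tau> \<longleftrightarrow>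
    (\<exists>P. set P \<subseteq> paths_m (length Es) (inst_paths \<Delta> C k \<tau>)
       \<and> Inters (map (tgt (length Es)) P) \<le>\<^sub>T \<tau>
       \<and> (\<forall>i\<in>{1..length Es}. typing \<Delta> k (Es ! (i - 1)) (Inters (map (arg i) P))))"
  unfolding Ball_atLeastAtMost_1_iff diff_Suc_1
  by (rule iffI)
    (auto intro: typing_apps_Comb_imp_paths[OF assms(2)] paths_imp_typing_apps_Comb[OF assms(2)])

end
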